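(* Let $K=\{x\in\mathbb{R}^n: Ax\ge b\}$ be a bounded full-dimensional polytope, where $A\in\mathbb{R}^{m\times n}$ has rows $a_1^\top,\dots,a_m^\top$ and $b\in\mathbb{R}^m$. Let $H(x)=\sum_{i=1}^m \frac{a_ia_i^\top}{(a_i^\top x-b_i)^2}$, $F(x)=\frac12\ln\det H(x)$, and $\mathrm{vc}(K)=\arg\min_{x\in K}F(x)$. Let $\mathrm{Cov}(K)$ be the covariance matrix of the uniform distribution on $K$. Then $$\frac{1}{4m^3n^2}\cdot H(\mathrm{vc}(K))\preceq \mathrm{Cov}(K)^{-1}\preceq 4n^2\cdot H(\mathrm{vc}(K)).$$
   Context: $\mathrm{Cov}(K)=\frac{1}{\mathrm{vol}(K)}\int_K (x-\mathrm{cg}(K))(x-\mathrm{cg}(K))^\top\,dx$ where $\mathrm{cg}(K)=\frac{1}{\mathrm{vol}(K)}\int_K x\,dx$ is the centroid. $\preceq$ denotes the Loewner order on symmetric matrices. *)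

theory Defs
  imports "HOL-Analysis.Analysis"
begin

definition polytope :: "real^'n^'m \<Rightarrow> real^'m \<Rightarrow> (real^'n) set" where
  "polytope A b = {x. \<forall>i. A $ i \<bullet> x \<ge> b $ i}"

definition outer :: "real^'n \<Rightarrow> real^'n \<Rightarrow> real^'n^'n" where
  "outer u v = (\<chi> j k. u $ j * v $ k)"

definition barrier_hess :: "real^'n^'m \<Rightarrow> real^'m \<Rightarrow> real^'n \<Rightarrow> real^'n^'n" where
  "barrier_hess A b x = (\<Sum>i\<in>UNIV. (1 / (A $ i \<bullet> x - b $ i)^2) *\<^sub>R outer (A $ i) (A $ i))"

definition vol_barrier :: "real^'n^'m \<Rightarrow> real^'m \<Rightarrow> real^'n \<Rightarrow> real" where
  "vol_barrier A b x = ln (det (barrier_hess A b x)) / 2"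

definition strict_polytope :: "real^'n^'m \<Rightarrow> real^'m \<Rightarrow> (real^'n) set" where
  "strict_polytope A b = {x. \<forall>i. A $ i \<bullet> x > b $ i}"

definition is_vol_center :: "real^'n^'m \<Rightarrow> real^'m \<Rightarrow> real^'n \<Rightarrow> bool" where
  "is_vol_center A b x \<longleftrightarrow> x \<in> strict_polytope A b \<and>
     (\<forall>y\<in>strict_polytope A b. vol_barrier A b x \<le> vol_barrier A b y)"

definition centroid :: "(real^'n) set \<Rightarrow> real^'n" where
  "centroid K = (1 / measure lebesgue K) *\<^sub>R integral K (\<lambda>x. x)"

definition covariance :: "(real^'n) set \<Rightarrow> real^'n^'n" where
  "covariance K = (1 / measure lebesgue K) *\<^sub>R
      integral K (\<lambda>x. outer (x - centroid K) (x - centroid K))"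

definition loewner_le :: "real^'n^'n \<Rightarrow> real^'n^'n \<Rightarrow> bool" where
  "loewner_le P Q \<longleftrightarrow> (\<forall>v. v \<bullet> (P *v v) \<le> v \<bullet> (Q *v v))"

end

(* Write s_i = a_i^T x - b_i for the slacks, H = H(vc) and C = Cov(K).

   Upper bound on C^-1: the Dikin ellipsoid {vc + v : v^T H v <= 1} lies in K, so K contains
   the segment from vc - v to vc + v whenever v^T H v = 1.  A convex body containing two points
   p, q has variance at least (u^T (p - q))^2 / (16 n^2) in direction u: comparing K with its
   homothetic copy of ratio 1 - 1/n centred at a point z of K, which lies inside K and has
   volume at least vol(K)/4, shows that z is within 2n standard deviations of the centroid in
   every direction.  Hence (u^T v)^2 <= 4 n^2 (v^T H v)(u^T C u), i.e. C^-1 <= 4 n^2 H.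

   Lower bound on C^-1: at the minimiser vc of ln det H, Jacobi's formula gives
   sum_i sigma_i y_i = 0, where sigma_i = a_i^T H^-1 a_i / s_i^2 are the leverage scores
   (which sum to n) and y_i = a_i^T (x - vc) / s_i for a point x of K.  Since y_i >= -1 and
   y_i^2 <= sigma_i |y|^2 by Cauchy-Schwarz, every y_i is at most m n on K.  Thus
   |a_i^T (x - vc)| <= m n s_i on K, whence a_i^T C a_i <= (m n s_i)^2, and a second use of
   Cauchy-Schwarz gives (C u)^T H (C u) <= m^3 n^2 u^T C u, i.e. H <= m^3 n^2 C^-1. *)

theory Submission
  imports Defs
begin

section \<open>Quadratic forms, matrix inverses and Jacobi's formula\<close>

lemma matrix_inv_right:
  fixes M :: "'a::field^'n^'n"
  assumes "invertible M"
  shows "M ** matrix_inv M = mat 1"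
  using assms someI_ex[of "\<lambda>N. M ** N = mat 1 \<and> N ** M = mat 1"]
  by (auto simp: invertible_def matrix_inv_def)

lemma matrix_inv_left:
  fixes M :: "'a::field^'n^'n"
  assumes "invertible M"
  shows "matrix_inv M ** M = mat 1"
  using assms someI_ex[of "\<lambda>N. M ** N = mat 1 \<and> N ** M = mat 1"]
  by (auto simp: invertible_def matrix_inv_def)

lemma invertible_iff_trivial_kernel:
  fixes M :: "'a::field^'n^'n"
  shows "invertible M \<longleftrightarrow> (\<forall>v. M *v v = 0 \<longrightarrow> v = 0)"
  by (simp add: invertible_left_inverse matrix_left_invertible_ker)

lemma pos_def_imp_det_pos:
  fixes M :: "real^'n^'n"
  assumes pd: "\<And>v. v \<noteq> 0 \<Longrightarrow> 0 < v \<bullet> (M *v v)"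
  shows "det M > 0"
proof -
  define N where "N t = (1 - t) *\<^sub>R mat 1 + t *\<^sub>R M" for t :: real
  have "det (N t) \<noteq> 0" if "0 \<le> t" "t \<le> 1" for t
  proof -
    have "0 < v \<bullet> (N t *v v)" if "v \<noteq> 0" for v
    proof -
      have "v \<bullet> (N t *v v) = (1 - t) * (v \<bullet> v) + t * (v \<bullet> (M *v v))"
        by (simp add: N_def matrix_vector_mult_add_rdistrib inner_add_right
            flip: scaleR_matrix_vector_assoc)
      moreover have "0 < (1 - t) * (v \<bullet> v) \<or> 0 < t * (v \<bullet> (M *v v))"
        using \<open>0 \<le> t\<close> pd[OF \<open>v \<noteq> 0\<close>] \<open>v \<noteq> 0\<close>
        by (cases "t = 0") auto
      moreover have "0 \<le> (1 - t) * (v \<bullet> v)" "0 \<le> t * (v \<bullet> (M *v v))"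
        using \<open>0 \<le> t\<close> \<open>t \<le> 1\<close> pd[OF \<open>v \<noteq> 0\<close>] by simp_all
      ultimately show ?thesis
        by linarith
    qed
    then have "invertible (N t)"
      unfolding invertible_iff_trivial_kernel by force
    then show ?thesis
      using invertible_det_nz by blast
  qed
  moreover have "continuous_on {0..1} (\<lambda>t. det (N t))"
    unfolding det_def N_def by (intro continuous_intros)
  moreover have "det (N 0) = 1" "det (N 1) = det M"
    by (simp_all add: N_def)
  ultimately show ?thesis
    using IVT2'[of "\<lambda>t. det (N t)" 1 0 0] by force
qed

lemma psd_form_cauchy_schwarz:
  fixes M :: "real^'n^'n"
  assumes sym: "\<And>v w. v \<bullet> (M *v w) = w \<bullet> (M *v v)"
    and psd: "\<And>v. 0 \<le> v \<bullet> (M *v v)"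
  shows "(w \<bullet> (M *v v))^2 \<le> (w \<bullet> (M *v w)) * (v \<bullet> (M *v v))"
proof -
  define a c d where "a = w \<bullet> (M *v w)" and "c = w \<bullet> (M *v v)" and "d = v \<bullet> (M *v v)"
  have quadratic: "0 \<le> a + 2 * t * c + t^2 * d" for t
  proof -
    have "0 \<le> (w + t *\<^sub>R v) \<bullet> (M *v (w + t *\<^sub>R v))"
      by (rule psd)
    also have "\<dots> = a + 2 * t * c + t^2 * d"
      using sym[of v w]
      by (simp add: a_def c_def d_def matrix_vector_right_distrib inner_add_left inner_add_right
          matrix_vector_mult_scaleR algebra_simps power2_eq_square)
    finally show ?thesis .
  qed
  show ?thesis
  proof (cases "d = 0")
    case True
    have "c = 0"
    proof (rule ccontr)
      assume "c \<noteq> 0"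
      have "0 \<le> a + 2 * (- (a + 1) / (2 * c)) * c + (- (a + 1) / (2 * c))^2 * d"
        by (rule quadratic)
      then show False
        using \<open>c \<noteq> 0\<close> True by (simp add: field_simps)
    qed
    then show ?thesis
      using True by (simp add: a_def c_def d_def)
  next
    case False
    then have "d > 0"
      using psd[of v] by (simp add: d_def)
    have "0 \<le> a + 2 * (- c / d) * c + (- c / d)^2 * d"
      by (rule quadratic)
    also have "\<dots> = a - c^2 / d"
      using \<open>d > 0\<close> by (simp add: field_simps power2_eq_square)
    finally show ?thesis
      using \<open>d > 0\<close> by (simp add: a_def c_def d_def field_simps)
  qed
qed

lemma inner_sq_le_matrix_inv_form:
  fixes M :: "real^'n^'n"
  assumes "invertible M"
    and sym: "\<And>v w. v \<bullet> (M *v w) = w \<bullet> (M *v v)"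
    and psd: "\<And>v. 0 \<le> v \<bullet> (M *v v)"
  shows "(a \<bullet> d)^2 \<le> (a \<bullet> (matrix_inv M *v a)) * (d \<bullet> (M *v d))"
proof -
  define w where "w = matrix_inv M *v a"
  have Mw: "M *v w = a"
    using matrix_inv_right[OF assms(1)] by (simp add: w_def matrix_vector_mul_assoc)
  have "(a \<bullet> d)^2 = (w \<bullet> (M *v d))^2"
    using sym[of w d] by (simp add: Mw inner_commute)
  also have "\<dots> \<le> (w \<bullet> (M *v w)) * (d \<bullet> (M *v d))"
    by (rule psd_form_cauchy_schwarz[OF sym psd])
  finally show ?thesis
    by (simp only: Mw) (simp add: w_def inner_commute)
qed

lemma matrix_inv_psd:
  fixes M :: "real^'n^'n"
  assumes "invertible M" and psd: "\<And>v. 0 \<le> v \<bullet> (M *v v)"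
  shows "0 \<le> v \<bullet> (matrix_inv M *v v)"
proof -
  have "M *v (matrix_inv M *v v) = v"
    using matrix_inv_right[OF assms(1)] by (simp add: matrix_vector_mul_assoc)
  then show ?thesis
    using psd[of "matrix_inv M *v v"] by (simp add: inner_commute)
qed

lemma invertible_if_inner_sq_le:
  fixes C H :: "real^'n^'n"
  assumes bound: "\<And>u v. (u \<bullet> v)^2 \<le> (v \<bullet> (H *v v)) * (u \<bullet> (C *v u))"
  shows "invertible C"
  unfolding invertible_iff_trivial_kernel
proof (intro allI impI)
  fix u assume "C *v u = 0"
  then have "(u \<bullet> u)^2 \<le> 0"
    using bound[of u u] by simp
  then show "u = 0"
    by simp
qed

lemma matrix_inv_loewner_le_if_inner_sq_le:
  fixes C H :: "real^'n^'n"
  assumes "invertible C"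
    and H_psd: "\<And>v. 0 \<le> v \<bullet> (H *v v)"
    and bound: "\<And>u v. (u \<bullet> v)^2 \<le> (v \<bullet> (H *v v)) * (u \<bullet> (C *v u))"
  shows "loewner_le (matrix_inv C) H"
  unfolding loewner_le_def
proof
  fix v
  define u where "u = matrix_inv C *v v"
  have "C *v u = v"
    using matrix_inv_right[OF assms(1)] by (simp add: u_def matrix_vector_mul_assoc)
  then have "(v \<bullet> u)^2 \<le> (v \<bullet> (H *v v)) * (v \<bullet> u)"
    using bound[of u v] by (simp add: inner_commute)
  then have "v \<bullet> u \<le> v \<bullet> (H *v v)"
    using H_psd[of v] mult_right_le_imp_le[of "v \<bullet> u" "v \<bullet> u" "v \<bullet> (H *v v)"]
    by (cases "v \<bullet> u \<le> 0") (auto simp: power2_eq_square)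
  then show "v \<bullet> (matrix_inv C *v v) \<le> v \<bullet> (H *v v)"
    by (simp add: u_def)
qed

lemma loewner_le_matrix_inv_if_form_le:
  fixes C H :: "real^'n^'n"
  assumes "invertible C" and "0 < k"
    and bound: "\<And>u. (C *v u) \<bullet> (H *v (C *v u)) \<le> k * (u \<bullet> (C *v u))"
  shows "loewner_le ((1 / k) *\<^sub>R H) (matrix_inv C)"
  unfolding loewner_le_def
proof
  fix v
  define u where "u = matrix_inv C *v v"
  have "C *v u = v"
    using matrix_inv_right[OF assms(1)] by (simp add: u_def matrix_vector_mul_assoc)
  then show "v \<bullet> (((1 / k) *\<^sub>R H) *v v) \<le> v \<bullet> (matrix_inv C *v v)"
    using bound[of u] \<open>0 < k\<close>
    by (simp add: u_def inner_commute pos_divide_le_eq mult.commute flip: scaleR_matrix_vector_assoc)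
qed

lemma outer_mult_vector: "outer u w *v v = (w \<bullet> v) *\<^sub>R u"
  by (simp add: vec_eq_iff outer_def matrix_vector_mult_def inner_vec_def sum_distrib_left mult_ac)

lemma trace_sum_outer_mult:
  fixes a :: "'m::finite \<Rightarrow> real^'n" and G :: "real^'n^'n"
  shows "trace ((\<Sum>i\<in>UNIV. c i *\<^sub>R outer (a i) (a i)) ** G) = (\<Sum>i\<in>UNIV. c i * (a i \<bullet> (G *v a i)))"
proof -
  have "trace ((\<Sum>i\<in>UNIV. c i *\<^sub>R outer (a i) (a i)) ** G)
      = (\<Sum>k\<in>UNIV. \<Sum>l\<in>UNIV. \<Sum>i\<in>UNIV. c i * (a i $ k * (a i $ l * G $ l $ k)))"
    by (simp add: trace_def matrix_matrix_mult_def sum_component outer_def sum_distrib_left mult_ac)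
  also have "\<dots> = (\<Sum>k\<in>UNIV. \<Sum>i\<in>UNIV. \<Sum>l\<in>UNIV. c i * (a i $ k * (a i $ l * G $ l $ k)))"
    by (rule sum.cong[OF refl], rule sum.swap)
  also have "\<dots> = (\<Sum>i\<in>UNIV. \<Sum>k\<in>UNIV. \<Sum>l\<in>UNIV. c i * (a i $ k * (a i $ l * G $ l $ k)))"
    by (rule sum.swap)
  also have "\<dots> = (\<Sum>i\<in>UNIV. \<Sum>l\<in>UNIV. \<Sum>k\<in>UNIV. c i * (a i $ k * (a i $ l * G $ l $ k)))"
    by (rule sum.cong[OF refl], rule sum.swap)
  also have "\<dots> = (\<Sum>i\<in>UNIV. c i * (a i \<bullet> (G *v a i)))"
    by (simp add: inner_vec_def matrix_vector_mult_def sum_distrib_left mult_ac)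
  finally show ?thesis .
qed

lemma sum_det_row_replace:
  fixes H D :: "'a::comm_ring_1^'n^'n"
  shows "(\<Sum>k\<in>UNIV. det (\<chi> i. if i = k then D$k else H$i))
    = (\<Sum>p\<in>{p. p permutes UNIV}. of_int (sign p) * (\<Sum>k\<in>UNIV. D$k$(p k) * (\<Prod>j\<in>UNIV-{k}. H$j$(p j))))"
proof -
  have "(\<Prod>j\<in>UNIV. (\<chi> i. if i = k then D$k else H$i)$j$(p j)) = D$k$(p k) * (\<Prod>j\<in>UNIV-{k}. H$j$(p j))"
    for k and p :: "'n \<Rightarrow> 'n"
    by (subst prod.remove[of _ k]) (auto intro!: prod.cong)
  then have "(\<Sum>k\<in>UNIV. det (\<chi> i. if i = k then D$k else H$i))
      = (\<Sum>k\<in>UNIV. \<Sum>p\<in>{p. p permutes UNIV}. of_int (sign p) * (D$k$(p k) * (\<Prod>j\<in>UNIV-{k}. H$j$(p j))))"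
    by (simp add: det_def)
  also have "\<dots> = (\<Sum>p\<in>{p. p permutes UNIV}. \<Sum>k\<in>UNIV. of_int (sign p) * (D$k$(p k) * (\<Prod>j\<in>UNIV-{k}. H$j$(p j))))"
    by (rule sum.swap)
  finally show ?thesis
    by (simp add: sum_distrib_left)
qed

lemma det_row_replace:
  fixes H :: "'a::field^'n^'n"
  assumes "invertible H"
  shows "det (\<chi> i. if i = k then w else H$i) = (w v* matrix_inv H)$k * det H"
proof -
  define x where "x = w v* matrix_inv H"
  have "x v* H = w"
    by (simp add: x_def vector_matrix_mul_assoc matrix_inv_left[OF assms])
  moreover have "(\<Sum>i\<in>UNIV. x$i *s row i H) = x v* H"
    by (simp add: vec_eq_iff sum_component row_def vector_matrix_mult_def mult.commute)
  ultimately have "(\<chi> i. if i = k then \<Sum>j\<in>UNIV. x$j *s row j H else row i H)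
      = (\<chi> i. if i = k then w else H$i)"
    by (simp add: vec_eq_iff row_def)
  with cramer_lemma_transpose[of k x H] show ?thesis
    by (simp add: x_def)
qed

lemma has_field_derivative_det:
  fixes E :: "real \<Rightarrow> real^'n^'n"
  assumes deriv: "\<And>j k. ((\<lambda>s. E s $ j $ k) has_field_derivative D $ j $ k) (at t)"
    and inv: "invertible (E t)"
  shows "((\<lambda>s. det (E s)) has_field_derivative det (E t) * trace (D ** matrix_inv (E t))) (at t)"
proof -
  have "(\<Sum>p\<in>{p. p permutes UNIV}. of_int (sign p) *
        (\<Sum>k\<in>UNIV. D$k$(p k) * (\<Prod>j\<in>UNIV-{k}. E t $ j $ p j)))
      = (\<Sum>k\<in>UNIV. det (\<chi> i. if i = k then D$k else E t $ i))"
    by (rule sum_det_row_replace[symmetric])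
  also have "\<dots> = (\<Sum>k\<in>UNIV. (D$k v* matrix_inv (E t))$k * det (E t))"
    using inv by (simp add: det_row_replace)
  also have "\<dots> = det (E t) * trace (D ** matrix_inv (E t))"
    by (simp add: trace_def matrix_matrix_mult_def vector_matrix_mult_def sum_distrib_left mult_ac)
  moreover have "((\<lambda>s. det (E s)) has_field_derivative
      (\<Sum>p\<in>{p. p permutes UNIV}. of_int (sign p) *
        (\<Sum>k\<in>UNIV. D$k$(p k) * (\<Prod>j\<in>UNIV-{k}. E t $ j $ p j)))) (at t)"
    unfolding det_def by (intro DERIV_sum DERIV_cmult has_field_derivative_prod deriv)
  ultimately show ?thesis
    by simp
qed

section \<open>Integrals over compact sets and the covariance matrix\<close>

lemma integrable_on_compact_continuous:
  fixes f :: "'a::euclidean_space \<Rightarrow> 'b::euclidean_space"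
  assumes "compact S" "continuous_on S f"
  shows "f integrable_on S"
proof -
  have "integrable lborel (\<lambda>x. indicator S x *\<^sub>R f x)"
    by (rule borel_integrable_compact[OF assms])
  then have "set_integrable lebesgue S f"
    by (simp add: set_integrable_def integrable_completion)
  then show ?thesis
    by (rule set_lebesgue_integral_eq_integral)
qed

lemma integral_const_compact:
  fixes K :: "'a::euclidean_space set"
  assumes "compact K"
  shows "integral K (\<lambda>x. c) = c * measure lebesgue K"
  using lmeasure_integral[OF lmeasurable_compact[OF assms]]
    integral_mult_left[of K "\<lambda>x. 1" c] by simp

lemma measure_pos_if_interior_nonempty:
  fixes K :: "'a::euclidean_space set"
  assumes "compact K" "convex K" "interior K \<noteq> {}"
  shows "0 < measure lebesgue K"
  using assms negligible_convex_interior[of K] negligible_iff_measure0[of K]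
    lmeasurable_compact[of K] measure_nonneg[of lebesgue K]
  by linarith

lemma integral_homothety_image:
  fixes K :: "'a::euclidean_space set" and h :: "'a \<Rightarrow> real"
  assumes K: "compact K" and h: "continuous_on UNIV h" and l: "0 < l"
  shows "integral ((\<lambda>x. l *\<^sub>R x + c) ` K) h = l ^ DIM('a) * integral K (\<lambda>x. h (l *\<^sub>R x + c))"
proof (cases "K = {}")
  case False
  define \<phi> where "\<phi> x = l *\<^sub>R x + c" for x :: 'a
  define S where "S = \<phi> ` K"
  obtain a where a: "K \<subseteq> cbox (-a) a"
    using bounded_subset_cbox_symmetric compact_imp_bounded[OF K] by metis
  have box: "\<phi> ` cbox (-a) a = cbox (\<phi> (-a)) (\<phi> a)"
    using l a False by (auto simp: \<phi>_def image_affinity_cbox)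
  have "compact S"
    unfolding S_def \<phi>_def by (intro compact_continuous_image K continuous_intros)
  then have "(h has_integral integral S h) S"
    by (intro integrable_integral integrable_on_compact_continuous continuous_on_subset[OF h]) auto
  moreover have "S \<subseteq> cbox (\<phi> (-a)) (\<phi> a)"
    using a by (auto simp: S_def box[symmetric])
  ultimately have "((\<lambda>y. if y \<in> S then h y else 0) has_integral integral S h) (cbox (\<phi> (-a)) (\<phi> a))"
    by (simp add: has_integral_restrict)
  moreover have "(\<lambda>y. (1 / l) *\<^sub>R y + - ((1 / l) *\<^sub>R c)) ` cbox (\<phi> (-a)) (\<phi> a) = cbox (-a) a"
    unfolding box[symmetric] image_image using l by (simp add: \<phi>_def algebra_simps)
  ultimately have "((\<lambda>x. if l *\<^sub>R x + c \<in> S then h (l *\<^sub>R x + c) else 0)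
      has_integral integral S h / l ^ DIM('a)) (cbox (-a) a)"
    using has_integral_affinity[of "\<lambda>y. if y \<in> S then h y else 0" _ "\<phi> (-a)" "\<phi> a" l c] l
    by (simp add: divide_inverse_commute)
  moreover have "l *\<^sub>R x + c \<in> S \<longleftrightarrow> x \<in> K" for x
    using l by (auto simp: S_def \<phi>_def)
  ultimately have "((\<lambda>x. h (l *\<^sub>R x + c)) has_integral integral S h / l ^ DIM('a)) K"
    using a by (simp add: has_integral_restrict)
  then show ?thesis
    using l by (simp add: S_def \<phi>_def integral_unique)
qed simp

lemma integral_add_le_of_negligible_Int:
  fixes h :: "'a::euclidean_space \<Rightarrow> real"
  assumes S: "compact S" and T: "compact T" and K: "compact K"
    and sub: "S \<union> T \<subseteq> K" and neg: "negligible (S \<inter> T)"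
    and h: "continuous_on UNIV h" "\<And>x. 0 \<le> h x"
  shows "integral S h + integral T h \<le> integral K h"
proof -
  have int: "h integrable_on X" if "compact X" for X
    using that continuous_on_subset[OF h(1)] by (blast intro: integrable_on_compact_continuous)
  have "(h has_integral (integral S h + integral T h)) (S \<union> T)"
    using has_integral_Un[OF int[OF S, THEN integrable_integral] int[OF T, THEN integrable_integral] neg] .
  then have "integral S h + integral T h = integral (S \<union> T) h"
    by (simp add: integral_unique)
  also have "\<dots> \<le> integral K h"
    using sub h(2) by (intro integral_subset_le int compact_Un S T K) auto
  finally show ?thesis .
qed

lemma inner_centroid:
  fixes K :: "(real^'n) set"
  assumes "compact K"
  shows "u \<bullet> centroid K = integral K (\<lambda>x. u \<bullet> x) / measure lebesgue K"
proof -
  have "(\<lambda>x. x) integrable_on K"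
    by (rule integrable_on_compact_continuous[OF assms]) (intro continuous_intros)
  then have "integral K (\<lambda>x. u \<bullet> x) = u \<bullet> integral K (\<lambda>x. x)"
    using integral_linear[OF _ bounded_linear_inner_right, of "\<lambda>x. x" K u] by (simp add: o_def)
  then show ?thesis
    by (simp add: centroid_def)
qed

lemma integral_inner_diff_centroid:
  fixes K :: "(real^'n) set"
  assumes K: "compact K" and V: "measure lebesgue K > 0"
  shows "integral K (\<lambda>x. u \<bullet> (x - centroid K)) = 0"
proof -
  have "integral K (\<lambda>x. u \<bullet> x - u \<bullet> centroid K)
      = integral K (\<lambda>x. u \<bullet> x) - u \<bullet> centroid K * measure lebesgue K"
    by (subst integral_diff)
      (auto intro!: integrable_on_compact_continuous K continuous_intros
        simp: integral_const_compact[OF K])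
  then show ?thesis
    using inner_centroid[OF K, of u] V by (simp add: inner_diff_right)
qed

lemma integral_sq_inner_shift:
  fixes K :: "(real^'n) set"
  assumes K: "compact K" and V: "measure lebesgue K > 0"
  shows "integral K (\<lambda>x. (u \<bullet> x - c)^2)
    = integral K (\<lambda>x. (u \<bullet> (x - centroid K))^2) + (u \<bullet> centroid K - c)^2 * measure lebesgue K"
proof -
  define f where "f x = u \<bullet> (x - centroid K)" for x
  define D where "D = u \<bullet> centroid K - c"
  have "(u \<bullet> x - c)^2 = ((f x)^2 + 2 * D * f x) + D^2" for x
    by (simp add: f_def D_def inner_diff_right power2_eq_square algebra_simps)
  moreover have "(\<lambda>x. (f x)^2) integrable_on K" "(\<lambda>x. 2 * D * f x) integrable_on K"
    "(\<lambda>x. D^2) integrable_on K"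
    by (auto intro!: integrable_on_compact_continuous K continuous_intros simp: f_def)
  ultimately have "integral K (\<lambda>x. (u \<bullet> x - c)^2)
      = integral K (\<lambda>x. (f x)^2) + 2 * D * integral K f + D^2 * measure lebesgue K"
    by (simp add: integral_add integrable_add integral_const_compact[OF K])
  then show ?thesis
    using integral_inner_diff_centroid[OF K V, of u] by (simp add: f_def[abs_def] D_def)
qed

lemma inner_covariance:
  fixes K :: "(real^'n) set"
  assumes "compact K"
  shows "w \<bullet> (covariance K *v v)
    = integral K (\<lambda>x. (w \<bullet> (x - centroid K)) * (v \<bullet> (x - centroid K))) / measure lebesgue K"
proof -
  define F where "F x = outer (x - centroid K) (x - centroid K)" for x
  have "F integrable_on K"
    unfolding F_def outer_def
    by (intro integrable_on_compact_continuous assms continuous_intros)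
  moreover have "bounded_linear (\<lambda>X::real^'n^'n. w \<bullet> (X *v v))"
    by (intro linear_conv_bounded_linear[THEN iffD1] linearI)
      (simp_all add: matrix_vector_mult_add_rdistrib inner_add_right
        flip: scaleR_matrix_vector_assoc)
  ultimately have "integral K (\<lambda>x. w \<bullet> (F x *v v)) = w \<bullet> (integral K F *v v)"
    using integral_linear by (fastforce simp: o_def)
  moreover have "F x *v v = (v \<bullet> (x - centroid K)) *\<^sub>R (x - centroid K)" for x
    by (simp add: F_def outer_def vec_eq_iff matrix_vector_mult_def inner_vec_def
        sum_distrib_left mult_ac)
  ultimately show ?thesis
    by (simp add: covariance_def F_def[abs_def] mult.commute flip: scaleR_matrix_vector_assoc)
qed

lemma covariance_quadratic_form:
  fixes K :: "(real^'n) set"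
  assumes "compact K"
  shows "u \<bullet> (covariance K *v u) = integral K (\<lambda>x. (u \<bullet> (x - centroid K))^2) / measure lebesgue K"
  by (simp add: inner_covariance[OF assms] power2_eq_square)

lemma covariance_form_commute:
  fixes K :: "(real^'n) set"
  assumes "compact K"
  shows "w \<bullet> (covariance K *v v) = v \<bullet> (covariance K *v w)"
  by (simp add: inner_covariance[OF assms] mult.commute)

lemma covariance_psd:
  fixes K :: "(real^'n) set"
  assumes "compact K"
  shows "0 \<le> u \<bullet> (covariance K *v u)"
  unfolding covariance_quadratic_form[OF assms]
  by (intro divide_nonneg_nonneg integral_nonneg integrable_on_compact_continuous assms
      continuous_intros) auto

lemma covariance_form_le:
  fixes K :: "(real^'n) set"
  assumes K: "compact K" and V: "measure lebesgue K > 0"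
    and bound: "\<And>x. x \<in> K \<Longrightarrow> (u \<bullet> x - c)^2 \<le> B"
  shows "u \<bullet> (covariance K *v u) \<le> B"
proof -
  have "integral K (\<lambda>x. (u \<bullet> (x - centroid K))^2) \<le> integral K (\<lambda>x. (u \<bullet> x - c)^2)"
    using integral_sq_inner_shift[OF K V, of u c] V by simp
  also have "\<dots> \<le> integral K (\<lambda>x. B)"
    by (intro integral_le integrable_on_compact_continuous K continuous_intros bound)
  finally show ?thesis
    using V by (simp add: covariance_quadratic_form[OF K] integral_const_compact[OF K] field_simps)
qed

section \<open>Directional variance of a convex body\<close>

lemma homothety_image_subset:
  assumes "convex K" "p \<in> K" "0 \<le> l" "l \<le> 1"
  shows "(\<lambda>x. l *\<^sub>R x + (1 - l) *\<^sub>R p) ` K \<subseteq> K"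
  using assms by (auto intro: convexD)

lemma integral_sq_inner_homothety_image:
  fixes K :: "(real^'n) set"
  assumes K: "compact K" and V: "measure lebesgue K > 0" and l: "0 < l"
  shows "integral ((\<lambda>x. l *\<^sub>R x + (1 - l) *\<^sub>R p) ` K) (\<lambda>y. (u \<bullet> y - u \<bullet> centroid K)^2)
    = l ^ CARD('n) * (l^2 * integral K (\<lambda>x. (u \<bullet> (x - centroid K))^2)
        + (1 - l)^2 * (u \<bullet> p - u \<bullet> centroid K)^2 * measure lebesgue K)"
proof -
  define \<mu> where "\<mu> = u \<bullet> centroid K"
  have "integral ((\<lambda>x. l *\<^sub>R x + (1 - l) *\<^sub>R p) ` K) (\<lambda>y. (u \<bullet> y - \<mu>)^2)
      = l ^ CARD('n) * integral K (\<lambda>x. ((l *\<^sub>R u) \<bullet> x - (\<mu> - (1 - l) * (u \<bullet> p)))^2)"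
    by (subst integral_homothety_image[OF K _ l])
      (auto intro!: continuous_intros simp: inner_add_right algebra_simps)
  also have "integral K (\<lambda>x. ((l *\<^sub>R u) \<bullet> x - (\<mu> - (1 - l) * (u \<bullet> p)))^2)
      = integral K (\<lambda>x. ((l *\<^sub>R u) \<bullet> (x - centroid K))^2)
        + ((l *\<^sub>R u) \<bullet> centroid K - (\<mu> - (1 - l) * (u \<bullet> p)))^2 * measure lebesgue K"
    by (rule integral_sq_inner_shift[OF K V])
  also have "integral K (\<lambda>x. ((l *\<^sub>R u) \<bullet> (x - centroid K))^2)
      = l^2 * integral K (\<lambda>x. (u \<bullet> (x - centroid K))^2)"
    by (simp add: power_mult_distrib)
  also have "(l *\<^sub>R u) \<bullet> centroid K - (\<mu> - (1 - l) * (u \<bullet> p)) = (1 - l) * (u \<bullet> p - \<mu>)"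
    by (simp add: \<mu>_def algebra_simps)
  finally show ?thesis
    by (simp add: \<mu>_def power_mult_distrib)
qed

lemma homothety_variance_le:
  fixes K :: "(real^'n) set"
  assumes K: "compact K" "convex K" and V: "measure lebesgue K > 0"
    and l: "0 < l" "l \<le> 1" and p: "p \<in> K"
  shows "l ^ CARD('n) * (l^2 * integral K (\<lambda>x. (u \<bullet> (x - centroid K))^2)
      + (1 - l)^2 * (u \<bullet> p - u \<bullet> centroid K)^2 * measure lebesgue K)
    \<le> integral K (\<lambda>x. (u \<bullet> (x - centroid K))^2)"
proof -
  define S where "S = (\<lambda>x. l *\<^sub>R x + (1 - l) *\<^sub>R p) ` K"
  have "compact S"
    unfolding S_def by (intro compact_continuous_image K continuous_intros)
  then have "integral S (\<lambda>y. (u \<bullet> y - u \<bullet> centroid K)^2) \<le> integral K (\<lambda>y. (u \<bullet> y - u \<bullet> centroid K)^2)"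
    using homothety_image_subset[OF K(2) p] l
    by (intro integral_subset_le integrable_on_compact_continuous K(1) continuous_intros)
      (auto simp: S_def)
  then show ?thesis
    by (simp add: S_def integral_sq_inner_homothety_image[OF K(1) V l(1)] inner_diff_right)
qed

lemma one_minus_inverse_pow_ge:
  assumes "2 \<le> n"
  shows "1 / 4 \<le> (1 - 1 / real n) ^ n"
proof -
  consider "n = 2" | "n = 3" | "4 \<le> n"
    using assms by linarith
  then show ?thesis
  proof cases
    case 3
    define x where "x = 1 - 1 / real n"
    have "x > 0"
      using 3 by (simp add: x_def field_simps)
    have "ln x \<ge> 1 - 1 / x"
      using ln_le_minus_one[of "1 / x"] \<open>x > 0\<close> by (simp add: ln_div)
    also have "1 - 1 / x = - 1 / (real n - 1)"
      using 3 by (simp add: x_def field_simps)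
    finally have "real n * (- 1 / (real n - 1)) \<le> real n * ln x"
      by (rule mult_left_mono) simp
    moreover have "real n * (- 1 / (real n - 1)) \<ge> - 4 / 3"
      using 3 by (simp add: field_simps)
    ultimately have "exp (- 4 / 3) \<le> exp (real n * ln x)"
      by simp
    then have "x ^ n \<ge> exp (- 4 / 3)"
      using \<open>x > 0\<close> by (simp add: exp_of_nat_mult)
    moreover have "exp (4 / 3 :: real) < 4"
    proof -
      have "exp (4 / 3 :: real) ^ 3 = exp 1 ^ 4"
        by (simp flip: exp_of_nat_mult)
      also have "\<dots> < (272 / 100) ^ 4"
        using e_less_272 by (intro power_strict_mono) auto
      also have "\<dots> < (4 :: real) ^ 3"
        by (simp add: power_divide)
      finally have "exp (4 / 3 :: real) ^ 3 < 4 ^ 3" .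
      then show ?thesis
        using power_less_imp_less_base[of "exp (4 / 3 :: real)" 3 4] by simp
    qed
    then have "exp (- 4 / 3 :: real) > 1 / 4"
      by (simp add: exp_minus field_simps)
    ultimately show ?thesis
      by (simp add: x_def)
  qed (simp_all add: power2_eq_square power3_eq_cube)
qed

lemma deviation_sq_le_variance:
  fixes K :: "(real^'n) set"
  assumes K: "compact K" "convex K" and V: "measure lebesgue K > 0"
    and z: "z \<in> K" and n: "2 \<le> CARD('n)"
  shows "(u \<bullet> z - u \<bullet> centroid K)^2 * measure lebesgue K
    \<le> 4 * real CARD('n)^2 * integral K (\<lambda>x. (u \<bullet> (x - centroid K))^2)"
proof -
  define N where "N = real CARD('n)"
  define l where "l = 1 - 1 / N"
  define W where "W = integral K (\<lambda>x. (u \<bullet> (x - centroid K))^2)"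
  define D where "D = (u \<bullet> z - u \<bullet> centroid K)^2 * measure lebesgue K"
  have N: "2 \<le> N"
    using n by (simp add: N_def)
  have l: "0 < l" "l \<le> 1"
    using N by (auto simp: l_def field_simps)
  have "0 \<le> W"
    unfolding W_def
    by (intro integral_nonneg integrable_on_compact_continuous K(1) continuous_intros) auto
  then have "0 \<le> l ^ CARD('n) * (l^2 * W)"
    using l by simp
  moreover have "l ^ CARD('n) * (l^2 * W + (1 - l)^2 * D) \<le> W"
    using homothety_variance_le[OF K V l z, of u] by (simp add: W_def D_def mult.assoc)
  ultimately have "l ^ CARD('n) * ((1 - l)^2 * D) \<le> W"
    by (simp add: distrib_left)
  moreover have "1 / 4 \<le> l ^ CARD('n)"
    unfolding l_def N_def by (rule one_minus_inverse_pow_ge[OF n])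
  moreover have "0 \<le> (1 - l)^2 * D"
    using V by (simp add: D_def)
  ultimately have "1 / 4 * ((1 - l)^2 * D) \<le> W"
    by (meson mult_right_mono order_trans)
  moreover have "(1 - l)^2 = 1 / N^2"
    by (simp add: l_def power_divide)
  ultimately show ?thesis
    using N by (simp add: W_def D_def N_def field_simps)
qed

text \<open>The homothety of ratio \<open>1 - 1/n\<close> used above degenerates for \<open>n = 1\<close>. Two half-size
  copies of \<open>K\<close> placed at its extreme points in direction \<open>u\<close> overlap only in a hyperplane,
  which gives a bound valid in every dimension.\<close>

lemma extreme_deviations_sq_le_variance:
  fixes K :: "(real^'n) set"
  assumes K: "compact K" "convex K" and V: "measure lebesgue K > 0" and "u \<noteq> 0"
    and pM: "pM \<in> K" "\<And>y. y \<in> K \<Longrightarrow> u \<bullet> y \<le> u \<bullet> pM"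
    and qm: "qm \<in> K" "\<And>y. y \<in> K \<Longrightarrow> u \<bullet> qm \<le> u \<bullet> y"
  shows "((u \<bullet> pM - u \<bullet> centroid K)^2 + (u \<bullet> qm - u \<bullet> centroid K)^2) * measure lebesgue K
    \<le> 2 ^ (CARD('n) + 2) * integral K (\<lambda>x. (u \<bullet> (x - centroid K))^2)"
proof -
  define \<mu> where "\<mu> = u \<bullet> centroid K"
  define W where "W = integral K (\<lambda>x. (u \<bullet> (x - centroid K))^2)"
  define h where "h = (\<lambda>y. (u \<bullet> y - \<mu>)^2)"
  define S1 where "S1 = (\<lambda>x. (1 / 2) *\<^sub>R x + (1 - 1 / 2) *\<^sub>R pM) ` K"
  define S2 where "S2 = (\<lambda>x. (1 / 2) *\<^sub>R x + (1 - 1 / 2) *\<^sub>R qm) ` K"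
  have "(u \<bullet> pM + u \<bullet> qm) / 2 \<le> u \<bullet> y" if "y \<in> S1" for y
    using that qm(2) by (auto simp: S1_def inner_add_right)
  moreover have "u \<bullet> y \<le> (u \<bullet> pM + u \<bullet> qm) / 2" if "y \<in> S2" for y
    using that pM(2) by (auto simp: S2_def inner_add_right)
  ultimately have "S1 \<inter> S2 \<subseteq> {y. u \<bullet> y = (u \<bullet> pM + u \<bullet> qm) / 2}"
    by fastforce
  then have "negligible (S1 \<inter> S2)"
    using negligible_hyperplane[of u] \<open>u \<noteq> 0\<close> negligible_subset by blast
  moreover have "S1 \<union> S2 \<subseteq> K"
    using homothety_image_subset[OF K(2) pM(1), of "1 / 2"]
      homothety_image_subset[OF K(2) qm(1), of "1 / 2"]
    unfolding S1_def S2_def by simp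
  moreover have "compact S1" "compact S2"
    unfolding S1_def S2_def by (intro compact_continuous_image K(1) continuous_intros)+
  ultimately have "integral S1 h + integral S2 h \<le> integral K h"
    using K(1) by (intro integral_add_le_of_negligible_Int) (auto simp: h_def intro!: continuous_intros)
  moreover have "integral K h = W"
    by (simp add: h_def W_def \<mu>_def inner_diff_right)
  moreover have "integral S1 h = (1 / 2) ^ CARD('n) * (W / 4 + (u \<bullet> pM - \<mu>)^2 * measure lebesgue K / 4)"
    unfolding S1_def h_def \<mu>_def W_def
    by (subst integral_sq_inner_homothety_image[OF K(1) V]) (simp_all add: power2_eq_square)
  moreover have "integral S2 h = (1 / 2) ^ CARD('n) * (W / 4 + (u \<bullet> qm - \<mu>)^2 * measure lebesgue K / 4)"
    unfolding S2_def h_def \<mu>_def W_def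
    by (subst integral_sq_inner_homothety_image[OF K(1) V]) (simp_all add: power2_eq_square)
  moreover have "0 \<le> W * (1 / 2) ^ CARD('n)"
    unfolding W_def
    by (intro mult_nonneg_nonneg integral_nonneg integrable_on_compact_continuous K(1)
        continuous_intros) auto
  ultimately have "(1 / 2) ^ CARD('n) * (((u \<bullet> pM - \<mu>)^2 + (u \<bullet> qm - \<mu>)^2) * measure lebesgue K)
      \<le> 4 * W"
    by (simp add: algebra_simps)
  then have "2 ^ CARD('n) * ((1 / 2) ^ CARD('n) * (((u \<bullet> pM - \<mu>)^2 + (u \<bullet> qm - \<mu>)^2) * measure lebesgue K))
      \<le> 2 ^ CARD('n) * (4 * W)"
    by simp
  then show ?thesis
    by (simp add: \<mu>_def W_def power_one_over mult.assoc[symmetric] power_add)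
qed

lemma width_sq_le_variance:
  fixes K :: "(real^'n) set"
  assumes K: "compact K" "convex K" and V: "measure lebesgue K > 0"
    and p: "p \<in> K" and q: "q \<in> K"
  shows "(u \<bullet> (p - q))^2 * measure lebesgue K
    \<le> 2 ^ (CARD('n) + 3) * integral K (\<lambda>x. (u \<bullet> (x - centroid K))^2)"
proof (cases "u = 0")
  case False
  define \<mu> where "\<mu> = u \<bullet> centroid K"
  have "K \<noteq> {}" "continuous_on K (\<lambda>x. u \<bullet> x)"
    using p by (auto intro: continuous_intros)
  then obtain pM qm where pM: "pM \<in> K" "\<And>y. y \<in> K \<Longrightarrow> u \<bullet> y \<le> u \<bullet> pM"
    and qm: "qm \<in> K" "\<And>y. y \<in> K \<Longrightarrow> u \<bullet> qm \<le> u \<bullet> y"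
    using continuous_attains_sup[OF K(1)] continuous_attains_inf[OF K(1)] by metis
  have "\<bar>u \<bullet> (p - q)\<bar> \<le> \<bar>(u \<bullet> pM - \<mu>) - (u \<bullet> qm - \<mu>)\<bar>"
    using pM(2)[OF p] pM(2)[OF q] qm(2)[OF p] qm(2)[OF q] by (simp add: inner_diff_right)
  then have "(u \<bullet> (p - q))^2 \<le> ((u \<bullet> pM - \<mu>) - (u \<bullet> qm - \<mu>))^2"
    by (simp add: abs_le_square_iff)
  also have "\<dots> \<le> 2 * ((u \<bullet> pM - \<mu>)^2 + (u \<bullet> qm - \<mu>)^2)"
    using zero_le_power2[of "(u \<bullet> pM - \<mu>) + (u \<bullet> qm - \<mu>)"]
    by (simp add: power2_eq_square algebra_simps)
  finally have "(u \<bullet> (p - q))^2 * measure lebesgue K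
      \<le> 2 * (((u \<bullet> pM - \<mu>)^2 + (u \<bullet> qm - \<mu>)^2) * measure lebesgue K)"
    using V by (simp add: mult_right_mono)
  also have "\<dots> \<le> 2 * (2 ^ (CARD('n) + 2) * integral K (\<lambda>x. (u \<bullet> (x - centroid K))^2))"
    using extreme_deviations_sq_le_variance[OF K V False pM qm] by (simp add: \<mu>_def mult_ac)
  finally show ?thesis
    by (simp add: power_add mult_ac)
qed simp

lemma width_sq_le_covariance:
  fixes K :: "(real^'n) set"
  assumes K: "compact K" "convex K" and V: "measure lebesgue K > 0"
    and p: "p \<in> K" and q: "q \<in> K"
  shows "(u \<bullet> (p - q))^2 \<le> 16 * real CARD('n)^2 * (u \<bullet> (covariance K *v u))"
proof -
  define W where "W = integral K (\<lambda>x. (u \<bullet> (x - centroid K))^2)"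
  have "(u \<bullet> (p - q))^2 * measure lebesgue K \<le> 16 * real CARD('n)^2 * W"
  proof (cases "CARD('n) = 1")
    case True
    then show ?thesis
      using width_sq_le_variance[OF K V p q, of u] by (simp add: W_def)
  next
    case False
    moreover have "0 < CARD('n)"
      by simp
    ultimately have n: "2 \<le> CARD('n)"
      by linarith
    have "(u \<bullet> (p - q))^2 \<le> 2 * ((u \<bullet> p - u \<bullet> centroid K)^2 + (u \<bullet> q - u \<bullet> centroid K)^2)"
      using zero_le_power2[of "(u \<bullet> p - u \<bullet> centroid K) + (u \<bullet> q - u \<bullet> centroid K)"]
      by (simp add: inner_diff_right power2_eq_square algebra_simps)
    then have "(u \<bullet> (p - q))^2 * measure lebesgue K
        \<le> 2 * ((u \<bullet> p - u \<bullet> centroid K)^2 + (u \<bullet> q - u \<bullet> centroid K)^2) * measure lebesgue K"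
      using V by (simp add: mult_right_mono)
    also have "\<dots> = 2 * ((u \<bullet> p - u \<bullet> centroid K)^2 * measure lebesgue K
          + (u \<bullet> q - u \<bullet> centroid K)^2 * measure lebesgue K)"
      by (simp add: algebra_simps)
    also have "\<dots> \<le> 2 * (4 * real CARD('n)^2 * W + 4 * real CARD('n)^2 * W)"
      using deviation_sq_le_variance[OF K V p n, of u] deviation_sq_le_variance[OF K V q n, of u]
      by (simp add: W_def)
    finally show ?thesis
      by (simp add: mult_ac)
  qed
  then have "(u \<bullet> (p - q))^2 \<le> 16 * real CARD('n)^2 * W / measure lebesgue K"
    using V by (simp add: pos_le_divide_eq)
  then show ?thesis
    by (simp add: covariance_quadratic_form[OF K(1)] W_def)
qed

section \<open>The barrier Hessian\<close>

lemma compact_polytope: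
  assumes "bounded (polytope A b)"
  shows "compact (polytope A b)"
proof -
  have "polytope A b = (\<Inter>i. {x. A$i \<bullet> x \<ge> b$i})"
    by (auto simp: polytope_def)
  then have "closed (polytope A b)"
    by (simp add: closed_INT closed_halfspace_ge)
  with assms show ?thesis
    by (simp add: compact_eq_bounded_closed)
qed

lemma convex_polytope: "convex (polytope A b)"
proof -
  have "polytope A b = (\<Inter>i. {x. A$i \<bullet> x \<ge> b$i})"
    by (auto simp: polytope_def)
  then show ?thesis
    by (simp add: convex_INT convex_halfspace_ge)
qed

lemma open_strict_polytope:
  fixes A :: "real^'n^'m"
  shows "open (strict_polytope A b)"
proof -
  have "strict_polytope A b = (\<Inter>i. {x. A$i \<bullet> x > b$i})"
    by (auto simp: strict_polytope_def)
  then show ?thesis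
    by (simp add: open_INT open_halfspace_gt)
qed

lemma inner_barrier_hess:
  "w \<bullet> (barrier_hess A b x *v v) = (\<Sum>i\<in>UNIV. (A$i \<bullet> w) * (A$i \<bullet> v) / (A$i \<bullet> x - b$i)^2)"
proof -
  have "barrier_hess A b x *v v = (\<Sum>i\<in>UNIV. (1 / (A$i \<bullet> x - b$i)^2) *\<^sub>R (outer (A$i) (A$i) *v v))"
    unfolding barrier_hess_def
    by (simp add: vec_eq_iff matrix_vector_mult_def sum_component outer_def sum_distrib_left
        sum_distrib_right) (subst sum.swap, simp add: algebra_simps)
  then show ?thesis
    by (simp add: outer_mult_vector inner_sum_right algebra_simps inner_commute)
qed

lemma barrier_hess_form:
  "v \<bullet> (barrier_hess A b x *v v) = (\<Sum>i\<in>UNIV. (A$i \<bullet> v)^2 / (A$i \<bullet> x - b$i)^2)"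
  by (simp add: inner_barrier_hess power2_eq_square)

lemma barrier_hess_form_commute:
  "w \<bullet> (barrier_hess A b x *v v) = v \<bullet> (barrier_hess A b x *v w)"
  by (simp add: inner_barrier_hess mult.commute)

lemma barrier_hess_psd: "0 \<le> v \<bullet> (barrier_hess A b x *v v)"
  by (simp add: barrier_hess_form sum_nonneg)

lemma barrier_hess_pos_def:
  assumes bounded: "bounded (polytope A b)" and x: "x \<in> strict_polytope A b" and "v \<noteq> 0"
  shows "0 < v \<bullet> (barrier_hess A b x *v v)"
proof (rule ccontr)
  assume "\<not> 0 < v \<bullet> (barrier_hess A b x *v v)"
  then have "\<forall>i\<in>UNIV. (A$i \<bullet> v)^2 / (A$i \<bullet> x - b$i)^2 = 0"
    using barrier_hess_psd[of v A b x] by (simp add: barrier_hess_form sum_nonneg_eq_0_iff)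
  then have "A$i \<bullet> v = 0" for i
    using x by (simp add: strict_polytope_def) (metis order_less_irrefl)
  then have line: "x + t *\<^sub>R v \<in> polytope A b" for t
    using x by (auto simp: polytope_def strict_polytope_def inner_add_right less_imp_le)
  obtain B where B: "\<And>y. y \<in> polytope A b \<Longrightarrow> norm y \<le> B"
    using bounded unfolding bounded_iff by blast
  have "norm x \<le> B"
    using B[OF line[of 0]] by simp
  then have "0 \<le> B"
    using norm_ge_zero[of x] by linarith
  define t where "t = (2 * B + 1) / norm v"
  have "norm (t *\<^sub>R v) = 2 * B + 1"
    using \<open>v \<noteq> 0\<close> \<open>0 \<le> B\<close> by (simp add: t_def)
  moreover have "norm (t *\<^sub>R v) \<le> norm (x + t *\<^sub>R v) + norm x"
    using norm_triangle_ineq4[of "x + t *\<^sub>R v" x] by simp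
  ultimately show False
    using B[OF line[of t]] \<open>norm x \<le> B\<close> by simp
qed

lemma barrier_hess_invertible:
  assumes "bounded (polytope A b)" "x \<in> strict_polytope A b"
  shows "invertible (barrier_hess A b x)"
  unfolding invertible_iff_trivial_kernel
  using barrier_hess_pos_def[OF assms] by force

lemma dikin_ellipsoid_subset:
  assumes x: "x \<in> strict_polytope A b" and v: "v \<bullet> (barrier_hess A b x *v v) \<le> 1"
  shows "x + v \<in> polytope A b"
  unfolding polytope_def
proof (intro CollectI allI)
  fix i
  define s where "s = A$i \<bullet> x - b$i"
  have "s > 0"
    using x by (simp add: strict_polytope_def s_def)
  have "(A$i \<bullet> v)^2 / s^2 \<le> v \<bullet> (barrier_hess A b x *v v)"
    unfolding barrier_hess_form s_def by (rule member_le_sum) auto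
  then have "(A$i \<bullet> v)^2 \<le> s^2 * (v \<bullet> (barrier_hess A b x *v v))"
    using \<open>s > 0\<close> by (simp add: field_simps)
  also have "\<dots> \<le> s^2"
    using v by (simp add: mult_left_le)
  finally have "(A$i \<bullet> v)^2 \<le> s^2" .
  then have "\<bar>A$i \<bullet> v\<bar> \<le> s"
    using \<open>s > 0\<close> by (simp add: abs_le_square_iff[symmetric])
  then show "b$i \<le> A$i \<bullet> (x + v)"
    by (simp add: s_def inner_add_right)
qed

lemma leverage_scores_sum:
  fixes A :: "real^'n^'m"
  assumes "invertible (barrier_hess A b x)"
  shows "(\<Sum>i\<in>UNIV. A$i \<bullet> (matrix_inv (barrier_hess A b x) *v A$i) / (A$i \<bullet> x - b$i)^2)
    = real CARD('n)"
proof -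
  have "real CARD('n) = trace (barrier_hess A b x ** matrix_inv (barrier_hess A b x))"
    by (simp add: matrix_inv_right[OF assms] trace_I)
  also have "\<dots> = (\<Sum>i\<in>UNIV. A$i \<bullet> (matrix_inv (barrier_hess A b x) *v A$i) / (A$i \<bullet> x - b$i)^2)"
    unfolding barrier_hess_def[of A b x] by (simp add: trace_sum_outer_mult)
  finally show ?thesis ..
qed

lemma has_field_derivative_barrier_hess_line:
  assumes x: "x \<in> strict_polytope A b"
  shows "((\<lambda>t. barrier_hess A b (x + t *\<^sub>R d) $ j $ k) has_field_derivative
      (\<Sum>i\<in>UNIV. (- 2 * (A$i \<bullet> d) / (A$i \<bullet> x - b$i)^3) *\<^sub>R outer (A$i) (A$i)) $ j $ k) (at 0)"
proof -
  have inverse_sq: "((\<lambda>t. 1 / (s + t * e)^2) has_field_derivative - 2 * e / s^3) (at 0)"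
    if "s \<noteq> 0" for s e :: real
    using that by (auto intro!: derivative_eq_intros simp: field_simps power2_eq_square power3_eq_cube)
  then have "((\<lambda>t. 1 / (A$i \<bullet> x - b$i + t * (A$i \<bullet> d))^2 * (A$i$j * A$i$k)) has_field_derivative
      - 2 * (A$i \<bullet> d) / (A$i \<bullet> x - b$i)^3 * (A$i$j * A$i$k)) (at 0)" for i
    using x by (intro DERIV_cmult_right inverse_sq) (auto simp: strict_polytope_def dest: spec[of _ i])
  then show ?thesis
    by (simp add: barrier_hess_def sum_component outer_def inner_add_right algebra_simps DERIV_sum)
qed

section \<open>The volumetric center\<close>

lemma has_field_derivative_vol_barrier_line:
  fixes A :: "real^'n^'m"
  assumes bounded: "bounded (polytope A b)" and x: "x \<in> strict_polytope A b"
  shows "((\<lambda>t. vol_barrier A b (x + t *\<^sub>R d)) has_field_derivative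
      - (\<Sum>i\<in>UNIV. (A$i \<bullet> d) * (A$i \<bullet> (matrix_inv (barrier_hess A b x) *v A$i)) / (A$i \<bullet> x - b$i)^3))
    (at 0)"
proof -
  define H G where "H = barrier_hess A b x" and "G = matrix_inv H"
  define D where "D = (\<Sum>i\<in>UNIV. (- 2 * (A$i \<bullet> d) / (A$i \<bullet> x - b$i)^3) *\<^sub>R outer (A$i) (A$i))"
  have "invertible H"
    using barrier_hess_invertible[OF bounded x] by (simp add: H_def)
  have "det H > 0"
    using barrier_hess_pos_def[OF bounded x] by (intro pos_def_imp_det_pos) (simp add: H_def)
  have "((\<lambda>t. det (barrier_hess A b (x + t *\<^sub>R d))) has_field_derivative det H * trace (D ** G)) (at 0)"
    using has_field_derivative_det[of "\<lambda>t. barrier_hess A b (x + t *\<^sub>R d)" D 0]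
      has_field_derivative_barrier_hess_line[OF x] \<open>invertible H\<close>
    by (simp add: H_def G_def D_def)
  then have "((\<lambda>t. vol_barrier A b (x + t *\<^sub>R d)) has_field_derivative trace (D ** G) / 2) (at 0)"
    using \<open>det H > 0\<close> unfolding vol_barrier_def
    by (auto intro!: derivative_eq_intros simp: H_def)
  moreover have "trace (D ** G)
      = - 2 * (\<Sum>i\<in>UNIV. (A$i \<bullet> d) * (A$i \<bullet> (G *v A$i)) / (A$i \<bullet> x - b$i)^3)"
    unfolding D_def trace_sum_outer_mult by (simp add: sum_distrib_left mult.assoc)
  ultimately show ?thesis
    by (simp add: G_def H_def)
qed

lemma vol_center_stationary:
  fixes A :: "real^'n^'m"
  assumes bounded: "bounded (polytope A b)" and vc: "is_vol_center A b x"
  shows "(\<Sum>i\<in>UNIV. (A$i \<bullet> d) * (A$i \<bullet> (matrix_inv (barrier_hess A b x) *v A$i)) / (A$i \<bullet> x - b$i)^3) = 0"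
    (is "?grad = 0")
proof -
  define S where "S = {t. x + t *\<^sub>R d \<in> strict_polytope A b}"
  have x: "x \<in> strict_polytope A b"
    and min: "\<And>y. y \<in> strict_polytope A b \<Longrightarrow> vol_barrier A b x \<le> vol_barrier A b y"
    using vc by (auto simp: is_vol_center_def)
  have "open S"
    unfolding S_def
    by (rule continuous_open_vimage[OF open_strict_polytope, unfolded vimage_def])
      (intro continuous_intros)
  moreover have "0 \<in> S" "\<forall>t\<in>S. vol_barrier A b (x + 0 *\<^sub>R d) \<le> vol_barrier A b (x + t *\<^sub>R d)"
    using x min by (simp_all add: S_def)
  ultimately have "(*) (- ?grad) = (\<lambda>h. 0)"
    using has_field_derivative_vol_barrier_line[OF bounded x, of d]
    by (intro differential_zero_maxmin[of 0 S "\<lambda>t. vol_barrier A b (x + t *\<^sub>R d)"])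
      (auto dest: has_field_derivative_imp_has_derivative)
  from fun_cong[OF this, of 1] show ?thesis
    by simp
qed

lemma weighted_term_le_total_weight:
  fixes y \<sigma> :: "'m::finite \<Rightarrow> real"
  assumes y: "\<And>j. -1 \<le> y j" and \<sigma>: "\<And>j. 0 \<le> \<sigma> j"
    and mean: "(\<Sum>j\<in>UNIV. \<sigma> j * y j) = 0"
  shows "\<sigma> i * y i \<le> (\<Sum>j\<in>UNIV. \<sigma> j)"
proof -
  have "\<sigma> i * y i = - (\<Sum>j\<in>UNIV-{i}. \<sigma> j * y j)"
    using mean sum.remove[of UNIV i "\<lambda>j. \<sigma> j * y j"] by simp
  also have "\<dots> \<le> (\<Sum>j\<in>UNIV-{i}. \<sigma> j)"
  proof -
    have "- (\<sigma> j * y j) \<le> \<sigma> j" for j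
      using mult_left_mono[OF y[of j] \<sigma>[of j]] by simp
    then show ?thesis
      by (simp add: sum_negf[symmetric] sum_mono)
  qed
  also have "\<dots> \<le> (\<Sum>j\<in>UNIV. \<sigma> j)"
    using sum.remove[of UNIV i \<sigma>] \<sigma>[of i] by simp
  finally show ?thesis .
qed

lemma le_card_mult_of_weighted_mean_zero:
  fixes y \<sigma> :: "'m::finite \<Rightarrow> real" and N :: real
  assumes y: "\<And>j. -1 \<le> y j" and \<sigma>: "\<And>j. 0 \<le> \<sigma> j" and total: "(\<Sum>j\<in>UNIV. \<sigma> j) = N"
    and mean: "(\<Sum>j\<in>UNIV. \<sigma> j * y j) = 0"
    and sq: "\<And>j. (y j)^2 \<le> \<sigma> j * (\<Sum>k\<in>UNIV. (y k)^2)"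
    and N: "1 \<le> N"
  shows "y i \<le> CARD('m) * N"
proof -
  define m where "m = real CARD('m)"
  have "Max (range y) \<in> range y"
    by (rule Max_in) auto
  then obtain i0 where i0: "y i0 = Max (range y)"
    by (metis rangeE)
  have max: "y j \<le> y i0" for j
    unfolding i0 by (rule Max_ge) auto
  have "1 \<le> m"
    by (simp add: m_def Suc_le_eq)
  have "y i0 \<le> m * N"
  proof (cases "y i0 \<le> 1")
    case True
    then show ?thesis
      using \<open>1 \<le> m\<close> N mult_mono[of 1 m 1 N] by simp
  next
    case False
    have "(\<Sum>k\<in>UNIV. (y k)^2) \<le> m * (y i0)^2"
    proof -
      have "(y k)^2 \<le> (y i0)^2" for k
        using y[of k] max[of k] False by (simp add: abs_le_square_iff[symmetric])
      then show ?thesis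
        using sum_mono[of UNIV "\<lambda>k. (y k)^2" "\<lambda>k. (y i0)^2"] by (simp add: m_def)
    qed
    then have "\<sigma> i0 * (\<Sum>k\<in>UNIV. (y k)^2) \<le> \<sigma> i0 * (m * (y i0)^2)"
      using \<sigma>[of i0] by (rule mult_left_mono)
    then have "(y i0)^2 \<le> (\<sigma> i0 * m) * (y i0)^2"
      using sq[of i0] by (simp add: mult.assoc)
    then have "1 \<le> \<sigma> i0 * m"
      using False by (simp add: power2_eq_square)
    have "\<sigma> i0 * y i0 \<le> N"
      using weighted_term_le_total_weight[OF y \<sigma> mean] total by simp
    then have "(\<sigma> i0 * m) * y i0 \<le> m * N"
      using \<open>1 \<le> m\<close> by (simp add: mult_ac mult_left_mono)
    moreover have "1 * y i0 \<le> (\<sigma> i0 * m) * y i0"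
      using \<open>1 \<le> \<sigma> i0 * m\<close> False by (intro mult_right_mono) auto
    ultimately show ?thesis
      by simp
  qed
  then show ?thesis
    using max[of i] by (simp add: m_def)
qed

lemma vol_center_slack_le:
  fixes A :: "real^'n^'m"
  assumes bounded: "bounded (polytope A b)" and vc: "is_vol_center A b xc"
    and x: "x \<in> polytope A b"
  shows "A$i \<bullet> (x - xc) \<le> real CARD('m) * real CARD('n) * (A$i \<bullet> xc - b$i)"
proof -
  define H G where "H = barrier_hess A b xc" and "G = matrix_inv H"
  define s where "s j = A$j \<bullet> xc - b$j" for j
  define y where "y j = A$j \<bullet> (x - xc) / s j" for j
  define \<sigma> where "\<sigma> j = A$j \<bullet> (G *v A$j) / (s j)^2" for j
  have xc: "xc \<in> strict_polytope A b"
    using vc by (simp add: is_vol_center_def)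
  then have s: "s j > 0" for j
    by (simp add: s_def strict_polytope_def)
  have inv: "invertible H"
    using barrier_hess_invertible[OF bounded xc] by (simp add: H_def)
  have "-1 \<le> y j" for j
    using x s[of j] by (simp add: y_def s_def polytope_def inner_diff_right field_simps)
  moreover have "0 \<le> \<sigma> j" for j
    using matrix_inv_psd[OF inv[unfolded H_def] barrier_hess_psd] by (simp add: \<sigma>_def G_def H_def)
  moreover have "(\<Sum>j\<in>UNIV. \<sigma> j) = real CARD('n)"
    using leverage_scores_sum[OF inv[unfolded H_def]] by (simp add: \<sigma>_def G_def H_def s_def)
  moreover have "(\<Sum>j\<in>UNIV. \<sigma> j * y j) = 0"
  proof -
    have "\<sigma> j * y j = (A$j \<bullet> (x - xc)) * (A$j \<bullet> (G *v A$j)) / (s j)^3" for j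
      using s[of j] by (simp add: \<sigma>_def y_def power2_eq_square power3_eq_cube field_simps)
    then show ?thesis
      using vol_center_stationary[OF bounded vc, of "x - xc"] by (simp add: G_def H_def s_def)
  qed
  moreover have "(y j)^2 \<le> \<sigma> j * (\<Sum>k\<in>UNIV. (y k)^2)" for j
  proof -
    have "(\<Sum>k\<in>UNIV. (y k)^2) = (x - xc) \<bullet> (H *v (x - xc))"
      by (simp add: H_def barrier_hess_form y_def s_def power_divide)
    moreover have "(A$j \<bullet> (x - xc))^2 \<le> (A$j \<bullet> (G *v A$j)) * ((x - xc) \<bullet> (H *v (x - xc)))"
      unfolding G_def H_def
      by (rule inner_sq_le_matrix_inv_form[OF inv[unfolded H_def] barrier_hess_form_commute
            barrier_hess_psd])
    ultimately show ?thesis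
      using s[of j] by (simp add: y_def \<sigma>_def power_divide divide_right_mono)
  qed
  ultimately have "y i \<le> real CARD('m) * real CARD('n)"
    by (intro le_card_mult_of_weighted_mean_zero) (auto simp: Suc_le_eq)
  then show ?thesis
    using s[of i] by (simp add: y_def s_def field_simps)
qed

section \<open>Covariance versus barrier Hessian\<close>

lemma inner_sq_le_barrier_hess_covariance:
  fixes A :: "real^'n^'m"
  assumes bounded: "bounded (polytope A b)" and interior: "interior (polytope A b) \<noteq> {}"
    and x: "x \<in> strict_polytope A b"
  shows "(u \<bullet> v)^2 \<le> (v \<bullet> (((4 * real CARD('n)^2) *\<^sub>R barrier_hess A b x) *v v))
      * (u \<bullet> (covariance (polytope A b) *v u))"
proof (cases "v = 0")
  case False
  define K C H where "K = polytope A b" and "C = covariance K" and "H = barrier_hess A b x"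
  define \<rho> where "\<rho> = sqrt (v \<bullet> (H *v v))"
  define w where "w = (1 / \<rho>) *\<^sub>R v"
  have K: "compact K" "convex K" "0 < measure lebesgue K"
    using compact_polytope[OF bounded] convex_polytope
      measure_pos_if_interior_nonempty[OF compact_polytope[OF bounded] convex_polytope interior]
    by (simp_all add: K_def)
  have "\<rho> > 0"
    using barrier_hess_pos_def[OF bounded x False] by (simp add: \<rho>_def H_def)
  have scale: "(c *\<^sub>R v) \<bullet> (H *v (c *\<^sub>R v)) = c^2 * \<rho>^2" for c
    using barrier_hess_psd[of v A b x]
    by (simp add: \<rho>_def H_def matrix_vector_mult_scaleR power2_eq_square)
  have "w \<bullet> (H *v w) = 1" "(- w) \<bullet> (H *v (- w)) = 1"
    using scale[of "1 / \<rho>"] scale[of "- 1 / \<rho>"] \<open>\<rho> > 0\<close>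
    by (simp_all add: w_def power_divide)
  then have "x + w \<in> K" "x - w \<in> K"
    using dikin_ellipsoid_subset[OF x, of w] dikin_ellipsoid_subset[OF x, of "- w"]
    by (simp_all add: K_def H_def)
  from width_sq_le_covariance[OF K this, of u]
  have "(u \<bullet> ((x + w) - (x - w)))^2 \<le> 16 * real CARD('n)^2 * (u \<bullet> (C *v u))"
    by (simp add: C_def)
  moreover have "u \<bullet> ((x + w) - (x - w)) = 2 * (u \<bullet> v) / \<rho>"
    unfolding inner_diff_right inner_add_right by (simp add: w_def)
  ultimately have "(2 * (u \<bullet> v) / \<rho>)^2 \<le> 16 * real CARD('n)^2 * (u \<bullet> (C *v u))"
    by simp
  then have "(u \<bullet> v)^2 \<le> 4 * real CARD('n)^2 * \<rho>^2 * (u \<bullet> (C *v u))"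
    using \<open>\<rho> > 0\<close> by (simp add: power_divide power_mult_distrib field_simps)
  then show ?thesis
    using barrier_hess_psd[of v A b x]
    by (simp add: \<rho>_def C_def K_def H_def mult_ac flip: scaleR_matrix_vector_assoc)
qed simp

lemma barrier_hess_form_le_if_slack_bound:
  fixes A :: "real^'n^'m" and C :: "real^'n^'n"
  assumes x: "x \<in> strict_polytope A b"
    and sym: "\<And>v w. v \<bullet> (C *v w) = w \<bullet> (C *v v)" and psd: "\<And>v. 0 \<le> v \<bullet> (C *v v)"
    and slack: "\<And>i. A$i \<bullet> (C *v A$i) \<le> k * (A$i \<bullet> x - b$i)^2"
  shows "(C *v u) \<bullet> (barrier_hess A b x *v (C *v u)) \<le> real CARD('m) * k * (u \<bullet> (C *v u))"
proof -
  have "(A$i \<bullet> (C *v u))^2 / (A$i \<bullet> x - b$i)^2 \<le> k * (u \<bullet> (C *v u))" for i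
  proof -
    have "(A$i \<bullet> (C *v u))^2 \<le> (A$i \<bullet> (C *v A$i)) * (u \<bullet> (C *v u))"
      by (rule psd_form_cauchy_schwarz[OF sym psd])
    also have "\<dots> \<le> k * (A$i \<bullet> x - b$i)^2 * (u \<bullet> (C *v u))"
      using slack psd by (rule mult_right_mono)
    moreover have "0 < (A$i \<bullet> x - b$i)^2"
      using x by (simp add: strict_polytope_def less_imp_neq[symmetric])
    ultimately show ?thesis
      by (simp add: pos_divide_le_eq mult_ac)
  qed
  then have "(\<Sum>i\<in>UNIV. (A$i \<bullet> (C *v u))^2 / (A$i \<bullet> x - b$i)^2) \<le> (\<Sum>i\<in>(UNIV::'m set). k * (u \<bullet> (C *v u)))"
    by (rule sum_mono)
  then show ?thesis
    by (simp add: barrier_hess_form mult.assoc)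
qed

lemma covariance_row_form_le:
  fixes A :: "real^'n^'m"
  assumes bounded: "bounded (polytope A b)" and interior: "interior (polytope A b) \<noteq> {}"
    and vc: "is_vol_center A b xc"
  shows "A$i \<bullet> (covariance (polytope A b) *v A$i)
    \<le> (real CARD('m) * real CARD('n))^2 * (A$i \<bullet> xc - b$i)^2"
proof (rule covariance_form_le)
  show "compact (polytope A b)" "0 < measure lebesgue (polytope A b)"
    using measure_pos_if_interior_nonempty[OF compact_polytope[OF bounded] convex_polytope interior]
      compact_polytope[OF bounded] by simp_all
  fix x assume x: "x \<in> polytope A b"
  define s where "s = A$i \<bullet> xc - b$i"
  have "s > 0"
    using vc by (simp add: s_def is_vol_center_def strict_polytope_def)
  have "1 \<le> real CARD('m)" "1 \<le> real CARD('n)"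
    by (simp_all add: Suc_le_eq)
  then have "1 \<le> real CARD('m) * real CARD('n)"
    using mult_mono[of 1 "real CARD('m)" 1 "real CARD('n)"] by simp
  then have "s \<le> real CARD('m) * real CARD('n) * s"
    using \<open>s > 0\<close> by simp
  moreover have "- s \<le> A$i \<bullet> x - A$i \<bullet> xc"
    using x by (simp add: s_def polytope_def)
  moreover have "A$i \<bullet> x - A$i \<bullet> xc \<le> real CARD('m) * real CARD('n) * s"
    using vol_center_slack_le[OF bounded vc x, of i] by (simp add: s_def inner_diff_right)
  ultimately show "(A$i \<bullet> x - A$i \<bullet> xc)^2 \<le> (real CARD('m) * real CARD('n))^2 * s^2"
    by (simp add: abs_le_square_iff[symmetric] power_mult_distrib[symmetric] abs_le_iff)
qed

lemma barrier_hess_covariance_form_le: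
  fixes A :: "real^'n^'m"
  assumes "bounded (polytope A b)" "interior (polytope A b) \<noteq> {}" "is_vol_center A b xc"
  shows "(covariance (polytope A b) *v u) \<bullet> (barrier_hess A b xc *v (covariance (polytope A b) *v u))
    \<le> real CARD('m)^3 * real CARD('n)^2 * (u \<bullet> (covariance (polytope A b) *v u))"
proof -
  have "xc \<in> strict_polytope A b"
    using assms(3) by (simp add: is_vol_center_def)
  moreover have "compact (polytope A b)"
    by (rule compact_polytope[OF assms(1)])
  ultimately have "(covariance (polytope A b) *v u) \<bullet> (barrier_hess A b xc *v (covariance (polytope A b) *v u))
      \<le> real CARD('m) * (real CARD('m) * real CARD('n))^2 * (u \<bullet> (covariance (polytope A b) *v u))"
    by (intro barrier_hess_form_le_if_slack_bound covariance_form_commute covariance_psd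
        covariance_row_form_le[OF assms])
  then show ?thesis
    by (simp add: power2_eq_square power3_eq_cube mult_ac)
qed

theorem lemma4p12:
  fixes A :: "real^'n^'m" and b :: "real^'m" and xc :: "real^'n"
  assumes "bounded (polytope A b)"
    and "interior (polytope A b) \<noteq> {}"
    and "is_vol_center A b xc"
  shows "invertible (covariance (polytope A b)) \<and>
    loewner_le ((1 / (4 * real CARD('m) ^ 3 * real CARD('n) ^ 2)) *\<^sub>R barrier_hess A b xc)
               (matrix_inv (covariance (polytope A b))) \<and>
    loewner_le (matrix_inv (covariance (polytope A b)))
               ((4 * real CARD('n) ^ 2) *\<^sub>R barrier_hess A b xc)"
proof -
  define C H where "C = covariance (polytope A b)" and "H = barrier_hess A b xc"
  define m n where "m = real CARD('m)" and "n = real CARD('n)"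
  have xc: "xc \<in> strict_polytope A b"
    using assms(3) by (simp add: is_vol_center_def)
  have upper: "(u \<bullet> v)^2 \<le> (v \<bullet> (((4 * n^2) *\<^sub>R H) *v v)) * (u \<bullet> (C *v u))" for u v
    using inner_sq_le_barrier_hess_covariance[OF assms(1,2) xc] by (simp add: C_def H_def n_def)
  have lower: "(C *v u) \<bullet> (H *v (C *v u)) \<le> (4 * m^3 * n^2) * (u \<bullet> (C *v u))" for u
  proof -
    have "0 \<le> m^3 * n^2 * (u \<bullet> (C *v u))"
      using covariance_psd[OF compact_polytope[OF assms(1)], of u] by (simp add: C_def m_def n_def)
    then show ?thesis
      using barrier_hess_covariance_form_le[OF assms, of u] by (simp add: C_def H_def m_def n_def mult.assoc)
  qed
  have "invertible C"
    using upper by (rule invertible_if_inner_sq_le)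
  moreover have "loewner_le (matrix_inv C) ((4 * n^2) *\<^sub>R H)"
    using \<open>invertible C\<close> _ upper
    by (rule matrix_inv_loewner_le_if_inner_sq_le)
      (simp add: H_def barrier_hess_psd flip: scaleR_matrix_vector_assoc)
  moreover have "loewner_le ((1 / (4 * m^3 * n^2)) *\<^sub>R H) (matrix_inv C)"
    using \<open>invertible C\<close> _ lower
    by (rule loewner_le_matrix_inv_if_form_le) (simp add: m_def n_def)
  ultimately show ?thesis
    by (simp add: C_def H_def m_def n_def)
qed

end
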